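(* For every $\varepsilon\in\left(0,\tfrac12\right)$, there is a (deterministic) sliding-window $(4+\varepsilon)$-approximation algorithm for the minimum vertex cover, with space $O\!\left(\varepsilon^{-1}n\log^{2}n\right)$ bits; that is, at every time the algorithm outputs a set of vertices that is a vertex cover of the graph formed by the active window $W$ and whose size is at most $(4+\varepsilon)\cdot VC(W)$.
   Context: Graph-streaming sliding-window model: a stream of edge insertions of a simple graph on $V=[n]$ ($n$ known), no edge inserted twice (so window size $w\le n^2$). The window size $w$ is known in advance; the current graph is formed by the last $w$ edges (the active window $W$). The algorithm reads the stream once in order. $VC(W)$ denotes the minimum size of a vertex cover (a vertex set meeting every edge) of the graph on $V$ with edge set $W$. *)

theory Defs
  imports Complex_Main
begin

definition valid_stream :: "nat \<Rightarrow> nat set list \<Rightarrow> bool" where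
  "valid_stream n xs \<longleftrightarrow> distinct xs \<and> (\<forall>e\<in>set xs. e \<subseteq> {..<n} \<and> card e = 2)"

definition window :: "nat \<Rightarrow> nat set list \<Rightarrow> nat set set" where
  "window w xs = set (drop (length xs - w) xs)"

definition is_vertex_cover :: "nat \<Rightarrow> nat set set \<Rightarrow> nat set \<Rightarrow> bool" where
  "is_vertex_cover n E C \<longleftrightarrow> C \<subseteq> {..<n} \<and> (\<forall>e\<in>E. e \<inter> C \<noteq> {})"

definition vc_number :: "nat \<Rightarrow> nat set set \<Rightarrow> nat" where
  "vc_number n E = Min {card C | C. is_vertex_cover n E C}"

(* A deterministic one-pass streaming algorithm whose memory is a bit string:
   initial memory, update on each arriving edge, and output read off the memory.
   Space used on a stream = length of the memory bit string at each time. *)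
definition sw_vc_algorithm ::
  "nat \<Rightarrow> nat \<Rightarrow> real \<Rightarrow> real \<Rightarrow> bool list \<Rightarrow> (bool list \<Rightarrow> nat set \<Rightarrow> bool list)
   \<Rightarrow> (bool list \<Rightarrow> nat set) \<Rightarrow> bool" where
  "sw_vc_algorithm n w approx space init step out \<longleftrightarrow>
     (\<forall>xs. valid_stream n xs \<longrightarrow>
        (let s = foldl step init xs in
           real (length s) \<le> space \<and>
           is_vertex_cover n (window w xs) (out s) \<and>
           real (card (out s)) \<le> approx * real (vc_number n (window w xs))))"

end

theory Submission
  imports Defs
begin

text \<open>For every start time \<open>s\<close>, run the greedy maximal matching on the edges arriving from \<open>s\<close>
  on; its matched vertices cover those edges and number at most twice the optimum. Runs are thinned
  as in a smooth histogram: a run is dropped when its neighbours \<open>a\<close> (older) and \<open>c\<close> (newer)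
  satisfy \<open>|a| \<le> (1 + \<delta>) |c|\<close>. Covers have at most \<open>n\<close> vertices, so sizes fall by a factor
  \<open>1 + \<delta>\<close> every two runs and only \<open>O(log n / \<delta>)\<close> runs, of \<open>O(n)\<close> bits each, survive. The answer
  is the latest run started no later than the window. If it is not exactly at the window start,
  a dropped run certifies that at some time \<open>t\<close> it was within \<open>1 + \<delta>\<close> of a run started inside the
  window: it paid at most \<open>(1 + \<delta>) 2 OPT\<close> up to \<open>t\<close> and \<open>2 OPT\<close> afterwards, i.e.
  \<open>(4 + 2\<delta>) OPT\<close> with \<open>\<delta> = \<epsilon>/2\<close>.\<close>

text \<open>\<open>V\<close> is the set of matched vertices; \<open>e\<close> joins the greedy matching iff it misses \<open>V\<close>.\<close>
definition greedy_add :: "nat set \<Rightarrow> nat set \<Rightarrow> nat set" where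
  "greedy_add V e = (if e \<inter> V = {} then V \<union> e else V)"

lemma subset_foldl_greedy_add: "V \<subseteq> foldl greedy_add V es"
proof (induction es arbitrary: V)
  case (Cons e es)
  have "V \<subseteq> greedy_add V e" by (simp add: greedy_add_def)
  then show ?case using Cons[of "greedy_add V e"] by simp
qed simp

lemma foldl_greedy_add_subset: "foldl greedy_add V es \<subseteq> V \<union> \<Union>(set es)"
proof (induction es arbitrary: V)
  case (Cons e es)
  have "greedy_add V e \<subseteq> V \<union> e" by (simp add: greedy_add_def)
  then show ?case using Cons[of "greedy_add V e"] by auto
qed simp

lemma foldl_greedy_add_hits:
  "e \<in> set es \<Longrightarrow> e \<noteq> {} \<Longrightarrow> e \<inter> foldl greedy_add V es \<noteq> {}"
proof (induction es arbitrary: V)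
  case (Cons x es)
  show ?case
  proof (cases "e = x")
    case True
    then have "e \<inter> greedy_add V x \<noteq> {}" using Cons.prems by (auto simp: greedy_add_def)
    then show ?thesis using subset_foldl_greedy_add[of "greedy_add V x" es] by auto
  qed (use Cons in auto)
qed simp

text \<open>Each matched edge adds two vertices, and at least one of them is a vertex of the
  cover \<open>C\<close> that was not matched before.\<close>
lemma card_foldl_greedy_add_exchange:
  assumes "finite C" "finite V" "\<forall>e\<in>set es. card e = 2 \<and> e \<inter> C \<noteq> {}"
  shows "card (foldl greedy_add V es) + 2 * card (C \<inter> V)
           \<le> card V + 2 * card (C \<inter> foldl greedy_add V es)"
  using assms(2,3)
proof (induction es arbitrary: V)
  case (Cons e es)
  have e: "finite e" "card e = 2" "e \<inter> C \<noteq> {}"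
    using Cons.prems by (auto intro: card_ge_0_finite)
  have "finite (greedy_add V e)" using Cons.prems(1) e(1) by (simp add: greedy_add_def)
  then have IH: "card (foldl greedy_add (greedy_add V e) es) + 2 * card (C \<inter> greedy_add V e)
      \<le> card (greedy_add V e) + 2 * card (C \<inter> foldl greedy_add (greedy_add V e) es)"
    using Cons.IH Cons.prems(2) by simp
  have "card (greedy_add V e) + 2 * card (C \<inter> V) \<le> card V + 2 * card (C \<inter> greedy_add V e)"
  proof (cases "e \<inter> V = {}")
    case True
    then have "card (V \<union> e) = card V + 2"
      using e Cons.prems(1) by (simp add: card_Un_disjoint Int_commute)
    moreover have "card (C \<inter> (V \<union> e)) = card (C \<inter> V) + card (C \<inter> e)"
      using True \<open>finite C\<close> by (subst card_Un_disjoint[symmetric]) (auto simp: Int_Un_distrib)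
    moreover have "card (C \<inter> e) \<ge> 1"
      using e(3) \<open>finite C\<close> by (simp add: Int_commute Suc_le_eq card_gt_0_iff)
    ultimately show ?thesis using True by (simp add: greedy_add_def)
  qed (simp add: greedy_add_def)
  then show ?case using IH by simp
qed simp

lemma card_foldl_greedy_add_le:
  assumes "finite C" "finite V" "\<forall>e\<in>set es. card e = 2 \<and> e \<inter> C \<noteq> {}"
  shows "card (foldl greedy_add V es) \<le> card V + 2 * card C"
proof -
  have "card (C \<inter> foldl greedy_add V es) \<le> card C" using \<open>finite C\<close> by (simp add: card_mono)
  then show ?thesis using card_foldl_greedy_add_exchange[OF assms] by linarith
qed

definition segment :: "'a list \<Rightarrow> nat \<Rightarrow> nat \<Rightarrow> 'a list" where
  "segment xs s t = take (t - s) (drop s xs)"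

lemma segment_split:
  assumes "s \<le> t0" "t0 \<le> t"
  shows "segment xs s t = segment xs s t0 @ segment xs t0 t"
proof -
  have t: "t - s = (t0 - s) + (t - t0)" using assms by simp
  have "take (t - s) (drop s xs)
        = take (t0 - s) (drop s xs) @ take (t - t0) (drop (t0 - s) (drop s xs))"
    unfolding t by (rule take_add)
  then show ?thesis using assms by (simp add: segment_def)
qed

lemma set_segment_subset: "T \<le> s \<Longrightarrow> set (segment xs s t) \<subseteq> set (drop T xs)"
  unfolding segment_def by (meson order.trans set_drop_subset_set_drop set_take_subset)

lemma segment_length: "segment xs s (length xs) = drop s xs"
  by (simp add: segment_def)

lemma segment_snoc: "t \<le> length xs \<Longrightarrow> segment (xs @ [e]) s t = segment xs s t"
  by (simp add: segment_def)

lemma segment_snoc_end: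
  "s \<le> length xs \<Longrightarrow> segment (xs @ [e]) s (Suc (length xs)) = segment xs s (length xs) @ [e]"
  by (simp add: segment_def Suc_diff_le)

definition matching_cover :: "nat set list \<Rightarrow> nat \<Rightarrow> nat \<Rightarrow> nat set" where
  "matching_cover xs s t = foldl greedy_add {} (segment xs s t)"

lemma matching_cover_split:
  "s \<le> t0 \<Longrightarrow> t0 \<le> t \<Longrightarrow>
     matching_cover xs s t = foldl greedy_add (matching_cover xs s t0) (segment xs t0 t)"
  using segment_split[of s t0 t xs] by (simp add: matching_cover_def)

lemma matching_cover_snoc:
  "t \<le> length xs \<Longrightarrow> matching_cover (xs @ [e]) s t = matching_cover xs s t"
  by (simp add: matching_cover_def segment_snoc)

lemma matching_cover_snoc_end:
  "s \<le> length xs \<Longrightarrow>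
     matching_cover (xs @ [e]) s (Suc (length xs)) = greedy_add (matching_cover xs s (length xs)) e"
  by (simp add: matching_cover_def segment_snoc_end)

lemma valid_stream_butlast: "valid_stream n (xs @ [e]) \<Longrightarrow> valid_stream n xs"
  by (simp add: valid_stream_def)

lemma valid_stream_length_le: "valid_stream n xs \<Longrightarrow> length xs \<le> 2 ^ n"
proof -
  assume v: "valid_stream n xs"
  then have "card (set xs) \<le> card (Pow {..<n::nat})"
    by (intro card_mono) (auto simp: valid_stream_def)
  then show ?thesis using v by (simp add: valid_stream_def distinct_card card_Pow)
qed

lemma matching_cover_subset: "valid_stream n xs \<Longrightarrow> matching_cover xs s t \<subseteq> {..<n}"
proof -
  assume "valid_stream n xs"
  moreover have "set (segment xs s t) \<subseteq> set xs" using set_segment_subset[of 0] by simp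
  ultimately have "\<Union>(set (segment xs s t)) \<subseteq> {..<n}" by (auto simp: valid_stream_def)
  then show ?thesis
    using foldl_greedy_add_subset[of "{}" "segment xs s t"] by (simp add: matching_cover_def)
qed

lemma vc_number_attained:
  assumes "\<forall>e\<in>E. e \<subseteq> {..<n} \<and> e \<noteq> {}"
  obtains C where "is_vertex_cover n E C" "card C = vc_number n E"
proof -
  let ?Q = "{card C | C. is_vertex_cover n E C}"
  have "is_vertex_cover n E {..<n}"
    using assms unfolding is_vertex_cover_def by (auto simp: Int_absorb2)
  then have "?Q \<noteq> {}" by blast
  moreover have "?Q \<subseteq> {..n}"
  proof
    fix k assume "k \<in> ?Q"
    then obtain C where "k = card C" "C \<subseteq> {..<n}" by (auto simp: is_vertex_cover_def)
    then show "k \<in> {..n}" using card_mono[of "{..<n}" C] by simp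
  qed
  ultimately have "Min ?Q \<in> ?Q" by (meson Min_in finite_atMost finite_subset)
  then obtain C where "is_vertex_cover n E C" "card C = Min ?Q" by auto
  then show ?thesis using that unfolding vc_number_def by blast
qed

definition certified :: "real \<Rightarrow> nat set list \<Rightarrow> nat \<Rightarrow> nat \<Rightarrow> bool" where
  "certified d xs T s \<longleftrightarrow> s = T \<or>
     (\<exists>s' t. T < s' \<and> s' \<le> t \<and> t \<le> length xs \<and>
        real (card (matching_cover xs s t)) \<le> (1 + d) * real (card (matching_cover xs s' t)))"

lemma certified_snoc:
  assumes "certified d xs T s"
  shows "certified d (xs @ [e]) T s"
  using assms[unfolded certified_def]
proof (elim disjE exE conjE)
  fix s' t assume "T < s'" "s' \<le> t" "t \<le> length xs"
    "real (card (matching_cover xs s t)) \<le> (1 + d) * real (card (matching_cover xs s' t))"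
  then show ?thesis unfolding certified_def using matching_cover_snoc[of t xs e]
    by (intro disjI2 exI[of _ s'] exI[of _ t]) auto
qed (simp add: certified_def)

lemma matching_cover_is_vertex_cover:
  assumes "valid_stream n xs" "s \<le> T"
  shows "is_vertex_cover n (set (drop T xs)) (matching_cover xs s (length xs))"
  unfolding is_vertex_cover_def
proof (intro conjI ballI)
  show "matching_cover xs s (length xs) \<subseteq> {..<n}" using assms(1) by (rule matching_cover_subset)
next
  fix e assume e: "e \<in> set (drop T xs)"
  then have "e \<in> set (drop s xs)" using set_drop_subset_set_drop[OF assms(2), of xs] by blast
  moreover have "card e = 2"
    using assms(1) in_set_dropD[OF e] by (auto simp: valid_stream_def)
  then have "e \<noteq> {}" by auto
  ultimately show "e \<inter> matching_cover xs s (length xs) \<noteq> {}"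
    unfolding matching_cover_def segment_length by (rule foldl_greedy_add_hits)
qed

lemma card_certified_matching_cover_le:
  assumes v: "valid_stream n xs" and d: "0 \<le> d" and "s \<le> T" and "certified d xs T s"
  shows "real (card (matching_cover xs s (length xs)))
           \<le> (4 + 2 * d) * real (vc_number n (set (drop T xs)))"
proof -
  define W where "W = set (drop T xs)"
  have W: "\<forall>e\<in>W. e \<subseteq> {..<n} \<and> card e = 2"
    using v by (auto simp: W_def valid_stream_def dest: in_set_dropD)
  then have "\<forall>e\<in>W. e \<subseteq> {..<n} \<and> e \<noteq> {}" by auto
  then obtain C where C: "is_vertex_cover n W C" "card C = vc_number n W"
    by (rule vc_number_attained)
  have "finite C" using C(1) finite_subset by (auto simp: is_vertex_cover_def)
  have greedy: "card (foldl greedy_add V (segment xs a b)) \<le> card V + 2 * card C"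
    if "T \<le> a" "finite V" for V a b
  proof (rule card_foldl_greedy_add_le[OF \<open>finite C\<close> \<open>finite V\<close>])
    have "set (segment xs a b) \<subseteq> W" unfolding W_def using \<open>T \<le> a\<close> by (rule set_segment_subset)
    then show "\<forall>e\<in>set (segment xs a b). card e = 2 \<and> e \<inter> C \<noteq> {}"
      using W C(1) unfolding is_vertex_cover_def by blast
  qed
  have finite_cover: "finite (matching_cover xs a b)" for a b
    using matching_cover_subset[OF v] by (rule finite_subset) simp
  have "real (card (matching_cover xs s (length xs))) \<le> (4 + 2 * d) * real (card C)"
    using \<open>certified d xs T s\<close> unfolding certified_def
  proof (elim disjE exE conjE)
    assume "s = T"
    then have "card (matching_cover xs s (length xs)) \<le> 2 * card C"
      using greedy[of T "{}"] by (simp add: matching_cover_def)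
    then have "real (card (matching_cover xs s (length xs))) \<le> 2 * real (card C)" by simp
    also have "\<dots> \<le> (4 + 2 * d) * real (card C)" using d by (intro mult_right_mono) auto
    finally show ?thesis .
  next
    fix s' t assume st: "T < s'" "s' \<le> t" "t \<le> length xs"
      and cmp: "real (card (matching_cover xs s t)) \<le> (1 + d) * real (card (matching_cover xs s' t))"
    have "matching_cover xs s (length xs)
          = foldl greedy_add (matching_cover xs s t) (segment xs t (length xs))"
      using \<open>s \<le> T\<close> st by (intro matching_cover_split) auto
    then have "card (matching_cover xs s (length xs)) \<le> card (matching_cover xs s t) + 2 * card C"
      using st greedy[OF _ finite_cover] by simp
    moreover have "card (matching_cover xs s' t) \<le> 2 * card C"
      using st greedy[of s' "{}" t] by (simp add: matching_cover_def)
    then have "(1 + d) * real (card (matching_cover xs s' t)) \<le> (1 + d) * (2 * real (card C))"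
      using d by (intro mult_left_mono) auto
    ultimately show ?thesis using cmp by (simp add: algebra_simps)
  qed
  then show ?thesis using C(2) by (simp add: W_def)
qed

type_synonym greedy_run = "nat \<times> nat set"

definition comparable :: "real \<Rightarrow> greedy_run \<Rightarrow> greedy_run \<Rightarrow> bool" where
  "comparable d a c \<longleftrightarrow> real (card (snd a)) \<le> (1 + d) * real (card (snd c))"

fun cons_thin :: "real \<Rightarrow> greedy_run \<Rightarrow> greedy_run list \<Rightarrow> greedy_run list" where
  "cons_thin d a (b # c # L) =
     (if comparable d a c then cons_thin d a (c # L) else a # b # c # L)"
| "cons_thin d a L = a # L"

fun thin :: "real \<Rightarrow> greedy_run list \<Rightarrow> greedy_run list" where
  "thin d [] = []"
| "thin d (a # L) = cons_thin d a (thin d L)"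

fun thinned :: "real \<Rightarrow> greedy_run list \<Rightarrow> bool" where
  "thinned d (a # b # c # L) \<longleftrightarrow> \<not> comparable d a c \<and> thinned d (b # c # L)"
| "thinned d _ \<longleftrightarrow> True"

definition feed :: "nat set \<Rightarrow> greedy_run \<Rightarrow> greedy_run" where
  "feed e p = (fst p, greedy_add (snd p) e)"

fun sw_step :: "real \<Rightarrow> nat \<times> greedy_run list \<Rightarrow> nat set \<Rightarrow> nat \<times> greedy_run list" where
  "sw_step d (t, L) e = (Suc t, thin d (map (feed e) (L @ [(t, {})])))"

fun sw_output :: "nat \<Rightarrow> nat \<times> greedy_run list \<Rightarrow> nat set" where
  "sw_output w (t, L) =
     (if L = [] then {} else the (map_of L (Max {s \<in> fst ` set L. s \<le> t - w})))"

lemma thinned_Cons: "thinned d (a # L) \<Longrightarrow> thinned d L"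
  by (cases L; cases "tl L") auto

lemma thinned_cons_thin: "thinned d L \<Longrightarrow> thinned d (cons_thin d a L)"
  by (induction d a L rule: cons_thin.induct) (auto dest: thinned_Cons)

lemma thinned_thin: "thinned d (thin d L)"
  by (induction L) (auto intro: thinned_cons_thin)

lemma thinned_card_hd:
  assumes "0 \<le> d" "thinned d L" "2 * j + 3 \<le> length L"
  shows "(1 + d) ^ j \<le> real (card (snd (hd L)))"
  using assms(2,3)
proof (induction j arbitrary: L)
  case 0
  then obtain a b c L' where L: "L = a # b # c # L'"
    by (cases L; cases "tl L"; cases "tl (tl L)") auto
  then have "(1 + d) * real (card (snd c)) < real (card (snd a))"
    using "0.prems" by (simp add: comparable_def)
  moreover have "0 \<le> (1 + d) * real (card (snd c))" using \<open>0 \<le> d\<close> by simp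
  ultimately show ?case using L by simp
next
  case (Suc j)
  then obtain a b c L' where L: "L = a # b # c # L'" and len: "2 * j + 3 \<le> length (c # L')"
    by (cases L; cases "tl L"; cases "tl (tl L)") auto
  have "thinned d (c # L')" using Suc.prems(1) L by (auto dest: thinned_Cons)
  then have "(1 + d) ^ j \<le> real (card (snd c))" using Suc.IH[OF _ len] by simp
  then have "(1 + d) ^ Suc j \<le> (1 + d) * real (card (snd c))"
    using \<open>0 \<le> d\<close> by (simp add: mult_left_mono)
  also have "\<dots> < real (card (snd a))" using Suc.prems(1) L by (simp add: comparable_def)
  finally show ?case using L by simp
qed

lemma thinned_length_le:
  assumes "0 \<le> d" "thinned d L" "\<forall>p\<in>set L. card (snd p) \<le> n" "real n < (1 + d) ^ j"
  shows "length L \<le> 2 * j + 2"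
proof (rule ccontr)
  assume "\<not> length L \<le> 2 * j + 2"
  then have "(1 + d) ^ j \<le> real (card (snd (hd L)))" by (intro thinned_card_hd assms) auto
  moreover have "card (snd (hd L)) \<le> n"
    using assms(3) \<open>\<not> length L \<le> 2 * j + 2\<close> by (cases L) auto
  ultimately show False using assms(4) by linarith
qed

definition drop_middle :: "real \<Rightarrow> greedy_run list \<Rightarrow> greedy_run list \<Rightarrow> bool" where
  "drop_middle d L L' \<longleftrightarrow>
     (\<exists>pre a b c post. L = pre @ a # b # c # post \<and> L' = pre @ a # c # post \<and> comparable d a c)"

lemma drop_middle_Cons: "drop_middle d L L' \<Longrightarrow> drop_middle d (x # L) (x # L')"
  unfolding drop_middle_def by (metis append_Cons)

lemma drop_middles_Cons: "(drop_middle d)\<^sup>*\<^sup>* L L' \<Longrightarrow> (drop_middle d)\<^sup>*\<^sup>* (x # L) (x # L')"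
  by (induction rule: rtranclp_induct) (auto intro: rtranclp.rtrancl_into_rtrancl drop_middle_Cons)

lemma drop_middles_cons_thin: "(drop_middle d)\<^sup>*\<^sup>* (a # L) (cons_thin d a L)"
proof (induction d a L rule: cons_thin.induct)
  case (1 d a b c L)
  show ?case
  proof (cases "comparable d a c")
    case True
    then have "drop_middle d (a # b # c # L) (a # c # L)"
      unfolding drop_middle_def by (metis append_Nil)
    then show ?thesis using 1 True by (simp add: converse_rtranclp_into_rtranclp)
  qed simp
qed simp_all

lemma drop_middles_thin: "(drop_middle d)\<^sup>*\<^sup>* L (thin d L)"
proof (induction L)
  case (Cons a L)
  then have "(drop_middle d)\<^sup>*\<^sup>* (a # L) (a # thin d L)" by (rule drop_middles_Cons)
  then show ?case using drop_middles_cons_thin by (simp add: rtranclp_trans)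
qed simp

definition latest_run :: "greedy_run list \<Rightarrow> nat \<Rightarrow> greedy_run \<Rightarrow> bool" where
  "latest_run L T p \<longleftrightarrow> p \<in> set L \<and> fst p \<le> T \<and> (\<forall>q\<in>set L. fst q \<le> T \<longrightarrow> fst q \<le> fst p)"

definition sw_invariant :: "real \<Rightarrow> nat set list \<Rightarrow> greedy_run list \<Rightarrow> bool" where
  "sw_invariant d xs L \<longleftrightarrow>
     sorted_wrt (<) (map fst L) \<and>
     (\<forall>p\<in>set L. fst p < length xs \<and> snd p = matching_cover xs (fst p) (length xs)) \<and>
     (\<forall>T < length xs. \<exists>p. latest_run L T p \<and> certified d xs T (fst p))"

text \<open>Dropping \<open>b\<close> only affects times \<open>T\<close> between the starts of \<open>a\<close> and \<open>c\<close>; for those,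
  the comparability of \<open>a\<close> and \<open>c\<close> now certifies \<open>a\<close>.\<close>
lemma sw_invariant_drop_middle:
  assumes inv: "sw_invariant d xs L" and "drop_middle d L L'"
  shows "sw_invariant d xs L'"
proof -
  obtain pre a b c post where L: "L = pre @ a # b # c # post" and L': "L' = pre @ a # c # post"
    and "comparable d a c" using \<open>drop_middle d L L'\<close> unfolding drop_middle_def by blast
  have sorted: "sorted_wrt (<) (map fst L)"
    and runs: "\<forall>p\<in>set L. fst p < length xs \<and> snd p = matching_cover xs (fst p) (length xs)"
    using inv by (simp_all add: sw_invariant_def)
  have "set L' \<subseteq> set L" using L L' by auto
  have "sorted_wrt (<) (map fst L')" using sorted L L' by (auto simp: sorted_wrt_append)
  have "fst a < fst b" "fst b < fst c" "\<forall>q\<in>set pre. fst q < fst a" "\<forall>q\<in>set post. fst c < fst q"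
    using sorted L by (auto simp: sorted_wrt_append)
  have "\<exists>p. latest_run L' T p \<and> certified d xs T (fst p)" if "T < length xs" for T
  proof -
    obtain p where p: "latest_run L T p" "certified d xs T (fst p)"
      using inv \<open>T < length xs\<close> by (auto simp: sw_invariant_def)
    show ?thesis
    proof (cases "p = b")
      case False
      then have "latest_run L' T p" using p(1) L L' by (auto simp: latest_run_def)
      then show ?thesis using p(2) by blast
    next
      case True
      then have "fst a \<le> T" "T < fst c"
        using p(1) L \<open>fst a < fst b\<close> \<open>fst b < fst c\<close> by (auto simp: latest_run_def)
      then have "latest_run L' T a"
        using L' \<open>\<forall>q\<in>set pre. fst q < fst a\<close> \<open>\<forall>q\<in>set post. fst c < fst q\<close>
        by (fastforce simp: latest_run_def)
      moreover have "certified d xs T (fst a)"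
        unfolding certified_def
        using \<open>T < fst c\<close> \<open>comparable d a c\<close> runs L
        by (intro disjI2 exI[of _ "fst c"] exI[of _ "length xs"]) (auto simp: comparable_def)
      ultimately show ?thesis by blast
    qed
  qed
  then show ?thesis
    using \<open>sorted_wrt (<) (map fst L')\<close> \<open>set L' \<subseteq> set L\<close> runs
    by (auto simp: sw_invariant_def)
qed

lemma sw_invariant_drop_middles:
  "(drop_middle d)\<^sup>*\<^sup>* L L' \<Longrightarrow> sw_invariant d xs L \<Longrightarrow> sw_invariant d xs L'"
  by (induction rule: rtranclp_induct) (auto intro: sw_invariant_drop_middle)

lemma sw_invariant_feed:
  assumes inv: "sw_invariant d xs L"
  shows "sw_invariant d (xs @ [e]) (map (feed e) (L @ [(length xs, {})]))"
    (is "sw_invariant d _ ?L")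
proof -
  have sorted: "sorted_wrt (<) (map fst L)"
    and runs: "\<forall>p\<in>set L. fst p < length xs \<and> snd p = matching_cover xs (fst p) (length xs)"
    and latest: "\<forall>T < length xs. \<exists>p. latest_run L T p \<and> certified d xs T (fst p)"
    using inv by (simp_all add: sw_invariant_def)
  have fst_L: "map fst ?L = map fst L @ [length xs]" by (simp add: feed_def comp_def)
  have "sorted_wrt (<) (map fst ?L)"
    unfolding fst_L using sorted runs by (auto simp: sorted_wrt_append)
  moreover have "fst p < length (xs @ [e]) \<and>
      snd p = matching_cover (xs @ [e]) (fst p) (length (xs @ [e]))" if "p \<in> set ?L" for p
  proof -
    obtain q where "q \<in> set L \<or> q = (length xs, {})" and "p = feed e q"
      using \<open>p \<in> set ?L\<close> by auto
    moreover have "matching_cover xs (length xs) (length xs) = {}"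
      by (simp add: matching_cover_def segment_def)
    ultimately show ?thesis using runs by (auto simp: feed_def matching_cover_snoc_end less_imp_le)
  qed
  moreover have "\<exists>p. latest_run ?L T p \<and> certified d (xs @ [e]) T (fst p)"
    if T: "T < length (xs @ [e])" for T
  proof (cases "T = length xs")
    case True
    have "latest_run ?L T (feed e (length xs, {}))"
      using True runs by (auto simp: latest_run_def feed_def less_imp_le)
    then show ?thesis using True by (auto simp: certified_def feed_def)
  next
    case False
    then have "T < length xs" using T by simp
    then obtain p where "latest_run L T p" "certified d xs T (fst p)"
      using latest by blast
    then have "latest_run ?L T (feed e p)" "certified d (xs @ [e]) T (fst (feed e p))"
      using False T runs by (auto simp: latest_run_def feed_def certified_snoc)
    then show ?thesis by blast
  qed
  ultimately show ?thesis by (simp add: sw_invariant_def)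
qed

lemma sw_reachable:
  "\<exists>L. foldl (sw_step d) (0, []) xs = (length xs, L) \<and> sw_invariant d xs L \<and> thinned d L"
proof (induction xs rule: rev_induct)
  case Nil
  show ?case by (simp add: sw_invariant_def)
next
  case (snoc e xs)
  then obtain L where L: "foldl (sw_step d) (0, []) xs = (length xs, L)" "sw_invariant d xs L"
    by blast
  have "sw_invariant d (xs @ [e]) (thin d (map (feed e) (L @ [(length xs, {})])))"
    using sw_invariant_drop_middles[OF drop_middles_thin sw_invariant_feed[OF L(2)]] .
  then show ?case using L(1) thinned_thin by simp
qed

lemma sw_output_latest:
  assumes inv: "sw_invariant d xs L" and p: "latest_run L (length xs - w) p"
  shows "sw_output w (length xs, L) = matching_cover xs (fst p) (length xs)"
proof -
  have "distinct (map fst L)" using inv by (simp add: sw_invariant_def strict_sorted_iff)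
  then have "map_of L (fst p) = Some (snd p)"
    using p by (intro map_of_is_SomeI) (auto simp: latest_run_def)
  moreover have "Max {s \<in> fst ` set L. s \<le> length xs - w} = fst p"
    using p by (intro Max_eqI) (auto simp: latest_run_def)
  moreover have "snd p = matching_cover xs (fst p) (length xs)" "L \<noteq> []"
    using inv p by (auto simp: sw_invariant_def latest_run_def)
  ultimately show ?thesis by simp
qed

lemma sw_output_approx:
  assumes inv: "sw_invariant d xs L" and v: "valid_stream n xs" and "1 \<le> w" "0 \<le> d"
  shows "is_vertex_cover n (window w xs) (sw_output w (length xs, L)) \<and>
    real (card (sw_output w (length xs, L))) \<le> (4 + 2 * d) * real (vc_number n (window w xs))"
proof (cases "xs = []")
  case True
  then have "L = []" using inv by (cases L) (auto simp: sw_invariant_def)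
  then show ?thesis using True \<open>0 \<le> d\<close> by (simp add: window_def is_vertex_cover_def)
next
  case False
  then have "length xs - w < length xs" using \<open>1 \<le> w\<close> by simp
  then obtain p where p: "latest_run L (length xs - w) p" "certified d xs (length xs - w) (fst p)"
    using inv by (auto simp: sw_invariant_def)
  then have "fst p \<le> length xs - w" by (simp add: latest_run_def)
  then show ?thesis
    using sw_output_latest[OF inv p(1)] matching_cover_is_vertex_cover[OF v]
      card_certified_matching_cover_le[OF v \<open>0 \<le> d\<close> _ p(2)]
    by (simp add: window_def)
qed

definition sw_states :: "nat \<Rightarrow> nat \<Rightarrow> (nat \<times> greedy_run list) set" where
  "sw_states n m = {..2 ^ n} \<times> {L. set L \<subseteq> {..2 ^ n} \<times> Pow {..<n} \<and> length L \<le> m}"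

lemma finite_sw_states: "finite (sw_states n m)"
  unfolding sw_states_def by (intro finite_cartesian_product finite_lists_length_le) auto

lemma card_sw_states_le: "card (sw_states n m) \<le> 2 ^ ((m + 1) * (2 * n + 2))"
proof -
  let ?A = "{..(2::nat) ^ n} \<times> Pow {..<n}"
  have time: "card {..(2::nat) ^ n} \<le> 2 ^ (n + 1)" by simp
  have "card ?A \<le> 2 ^ (n + 1) * 2 ^ n"
    by (simp add: card_cartesian_product card_Pow)
  also have "\<dots> = 2 ^ (2 * n + 1)" by (simp add: power_add[symmetric])
  finally have run: "card ?A \<le> 2 ^ (2 * n + 1)" .
  have "card {L. set L \<subseteq> ?A \<and> length L \<le> m} = (\<Sum>i\<le>m. card ?A ^ i)"
    by (intro card_lists_length_le) simp
  also have "\<dots> \<le> (\<Sum>i\<le>m. 2 ^ ((2 * n + 1) * m))"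
  proof (intro sum_mono)
    fix i assume "i \<in> {..m}"
    have "card ?A ^ i \<le> (2 ^ (2 * n + 1)) ^ i" using run by (rule power_mono) simp
    also have "\<dots> = 2 ^ ((2 * n + 1) * i)" by (rule power_mult[symmetric])
    also have "\<dots> \<le> 2 ^ ((2 * n + 1) * m)"
      using \<open>i \<in> {..m}\<close> by (intro power_increasing mult_le_mono2) auto
    finally show "card ?A ^ i \<le> 2 ^ ((2 * n + 1) * m)" .
  qed
  also have "\<dots> = (m + 1) * 2 ^ ((2 * n + 1) * m)" by simp
  also have "\<dots> \<le> 2 ^ m * 2 ^ ((2 * n + 1) * m)"
    using less_exp[of m] by (intro mult_right_mono) (simp_all add: Suc_le_eq)
  finally have lists: "card {L. set L \<subseteq> ?A \<and> length L \<le> m} \<le> 2 ^ m * 2 ^ ((2 * n + 1) * m)" .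
  have "card (sw_states n m) \<le> 2 ^ (n + 1) * (2 ^ m * 2 ^ ((2 * n + 1) * m))"
    unfolding sw_states_def card_cartesian_product using time lists by (rule mult_mono) auto
  also have "\<dots> \<le> 2 ^ ((m + 1) * (2 * n + 2))"
    by (simp only: power_add[symmetric]) (intro power_increasing, auto simp: algebra_simps)
  finally show ?thesis .
qed

lemma foldl_sw_step_in_sw_states:
  assumes "valid_stream n xs" "0 \<le> d" "real n < (1 + d) ^ j"
  shows "foldl (sw_step d) (0, []) xs \<in> sw_states n (2 * j + 2)"
proof -
  obtain L where L: "foldl (sw_step d) (0, []) xs = (length xs, L)"
    "sw_invariant d xs L" "thinned d L"
    using sw_reachable by blast
  have len: "length xs \<le> 2 ^ n" using assms(1) by (rule valid_stream_length_le)
  have runs: "p \<in> set L \<Longrightarrow> fst p < length xs \<and> snd p \<subseteq> {..<n}" for p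
    using L(2) matching_cover_subset[OF assms(1)] by (auto simp: sw_invariant_def)
  then have "\<forall>p\<in>set L. card (snd p) \<le> n"
    using card_mono[of "{..<n}"] by fastforce
  then have "length L \<le> 2 * j + 2" using thinned_length_le assms(2,3) L(3) by blast
  moreover have "set L \<subseteq> {..2 ^ n} \<times> Pow {..<n}" using runs len by fastforce
  ultimately show ?thesis using L(1) len by (simp add: sw_states_def)
qed

text \<open>The memory strings are injective codes of the states in \<open>S\<close>; a step decodes, updates and
  re-encodes.\<close>
lemma bit_string_simulation:
  fixes f :: "'s \<Rightarrow> 'a \<Rightarrow> 's"
  assumes "finite S" "card S \<le> 2 ^ B"
    and reach: "\<And>xs. P xs \<Longrightarrow> foldl f start xs \<in> S"
    and prefix: "\<And>xs x. P (xs @ [x]) \<Longrightarrow> P xs"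
  obtains init step and dec :: "bool list \<Rightarrow> 's"
  where "\<And>xs. P xs \<Longrightarrow> length (foldl step init xs) = B \<and> dec (foldl step init xs) = foldl f start xs"
proof -
  let ?Bits = "{bs :: bool list. length bs = B}"
  have "card ?Bits = 2 ^ B" using card_lists_length_eq[of "UNIV :: bool set" B] by simp
  then have "\<exists>enc. enc ` S \<subseteq> ?Bits \<and> inj_on enc S"
    using \<open>card S \<le> 2 ^ B\<close> by (intro card_le_inj \<open>finite S\<close> finite_list_length) simp
  then obtain enc where enc: "enc ` S \<subseteq> ?Bits" "inj_on enc S" by blast
  define dec where "dec = the_inv_into S enc"
  define step where "step = (\<lambda>bs x. enc (f (dec bs) x))"
  have sim: "foldl step (enc start) xs = enc (foldl f start xs)" if "P xs" for xs
    using that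
  proof (induction xs rule: rev_induct)
    case (snoc x xs)
    then have "foldl f start xs \<in> S" by (blast intro: reach prefix)
    then show ?case
      using snoc prefix by (simp add: step_def dec_def the_inv_into_f_f[OF enc(2)])
  qed simp
  have "length (foldl step (enc start) xs) = B \<and> dec (foldl step (enc start) xs) = foldl f start xs"
    if "P xs" for xs
    using that sim reach enc by (auto simp: dec_def the_inv_into_f_f)
  then show thesis by (rule that)
qed

lemma sw_vc_algorithm_exists:
  assumes "0 \<le> d" "1 \<le> w" "real n < (1 + d) ^ j"
    and space: "real ((2 * j + 3) * (2 * n + 2)) \<le> space"
  shows "\<exists>init step out. sw_vc_algorithm n w (4 + 2 * d) space init step out"
proof -
  have "2 * j + 2 + 1 = 2 * j + 3" by simp
  note card = card_sw_states_le[of n "2 * j + 2", unfolded this]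
  obtain init step and dec :: "bool list \<Rightarrow> nat \<times> greedy_run list"
    where sim: "\<And>xs. valid_stream n xs \<Longrightarrow> length (foldl step init xs) = (2 * j + 3) * (2 * n + 2)
      \<and> dec (foldl step init xs) = foldl (sw_step d) (0, []) xs"
  proof (rule bit_string_simulation[OF finite_sw_states card])
    show "foldl (sw_step d) (0, []) xs \<in> sw_states n (2 * j + 2)" if "valid_stream n xs" for xs
      using that assms(1,3) by (rule foldl_sw_step_in_sw_states)
  qed (auto intro: valid_stream_butlast)
  have "sw_vc_algorithm n w (4 + 2 * d) space init step (sw_output w \<circ> dec)"
    unfolding sw_vc_algorithm_def Let_def
  proof (intro allI impI)
    fix xs assume v: "valid_stream n xs"
    obtain L where "foldl (sw_step d) (0, []) xs = (length xs, L)" "sw_invariant d xs L"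
      using sw_reachable by blast
    then show "real (length (foldl step init xs)) \<le> space \<and>
        is_vertex_cover n (window w xs) ((sw_output w \<circ> dec) (foldl step init xs)) \<and>
        real (card ((sw_output w \<circ> dec) (foldl step init xs)))
          \<le> (4 + 2 * d) * real (vc_number n (window w xs))"
      using sim[OF v] space sw_output_approx[OF _ v assms(2,1)] by simp
  qed
  then show ?thesis by blast
qed

text \<open>Since \<open>(1 + \<epsilon>/2) ^ \<lceil>2/\<epsilon>\<rceil> \<ge> 2\<close>, this many factors \<open>1 + \<epsilon>/2\<close> exceed \<open>n\<close>.\<close>
definition run_bound :: "real \<Rightarrow> nat \<Rightarrow> nat" where
  "run_bound \<epsilon> n = nat \<lceil>2 / \<epsilon>\<rceil> * (nat \<lceil>log 2 (real n)\<rceil> + 1)"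

lemma real_less_power_run_bound:
  assumes "0 < \<epsilon>" "1 \<le> n"
  shows "real n < (1 + \<epsilon> / 2) ^ run_bound \<epsilon> n"
proof -
  define r where "r = nat \<lceil>2 / \<epsilon>\<rceil>"
  define k where "k = nat \<lceil>log 2 (real n)\<rceil> + 1"
  have "2 / \<epsilon> \<le> real r" unfolding r_def by linarith
  then have "1 \<le> real r * (\<epsilon> / 2)" using assms(1) by (simp add: field_simps)
  then have "2 \<le> (1 + \<epsilon> / 2) ^ r"
    using Bernoulli_inequality[of "\<epsilon> / 2" r] assms(1) by linarith
  then have "(2::real) ^ k \<le> (1 + \<epsilon> / 2) ^ (r * k)"
    by (simp add: power_mult power_mono)
  moreover have "real n < 2 ^ k"
  proof -
    have "0 \<le> log 2 (real n)" using assms(2) by simp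
    then have "log 2 (real n) < real k" by (simp add: k_def) linarith
    then show ?thesis using assms(2) by (simp add: log_less_iff powr_realpow)
  qed
  ultimately show ?thesis by (simp add: run_bound_def r_def k_def)
qed

lemma run_bound_space_le:
  assumes "0 < \<epsilon>" "\<epsilon> < 1/2" "2 \<le> n"
  shows "real ((2 * run_bound \<epsilon> n + 3) * (2 * n + 2))
           \<le> 100 / \<epsilon> * real n * (log 2 (real n))\<^sup>2"
proof -
  define q where "q = 1 / \<epsilon>"
  define lg where "lg = log 2 (real n)"
  have "2 \<le> q" using assms(1,2) by (simp add: q_def field_simps)
  have "1 \<le> lg" using assms(3) by (simp add: lg_def)
  have "real (nat \<lceil>2 / \<epsilon>\<rceil>) = of_int \<lceil>2 / \<epsilon>\<rceil>" using assms(1) by simp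
  also have "\<dots> \<le> 2 * q + 1" unfolding q_def using of_int_ceiling_le_add_one[of "2 / \<epsilon>"] by simp
  finally have r: "real (nat \<lceil>2 / \<epsilon>\<rceil>) \<le> 5/2 * q" using \<open>2 \<le> q\<close> by linarith
  have k: "real (nat \<lceil>lg\<rceil> + 1) \<le> 3 * lg"
    using \<open>1 \<le> lg\<close> by linarith
  have "real (run_bound \<epsilon> n) \<le> (5/2 * q) * (3 * lg)"
    unfolding run_bound_def of_nat_mult lg_def[symmetric]
    using r k \<open>1 \<le> lg\<close> by (intro mult_mono) auto
  moreover have "2 * 1 \<le> q * lg" using \<open>2 \<le> q\<close> \<open>1 \<le> lg\<close> by (intro mult_mono) auto
  ultimately have runs: "real (2 * run_bound \<epsilon> n + 3) \<le> 17 * q * lg" by simp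
  have "real ((2 * run_bound \<epsilon> n + 3) * (2 * n + 2)) \<le> (17 * q * lg) * (3 * real n)"
    unfolding of_nat_mult using runs assms(3) \<open>2 * 1 \<le> q * lg\<close>
    by (intro mult_mono) (auto simp: mult.commute)
  also have "\<dots> = 51 * (q * real n) * lg" by (simp add: algebra_simps)
  also have "\<dots> \<le> 51 * (q * real n) * lg\<^sup>2"
    using \<open>2 \<le> q\<close> \<open>1 \<le> lg\<close> by (intro mult_left_mono) (auto simp: power2_eq_square)
  also have "\<dots> \<le> 100 * (q * real n) * lg\<^sup>2"
    using \<open>2 \<le> q\<close> by (intro mult_right_mono) auto
  finally show ?thesis by (simp add: q_def lg_def)
qed

theorem theorem4p6:
  shows "\<exists>K>0. \<forall>\<epsilon>::real. 0 < \<epsilon> \<and> \<epsilon> < 1/2 \<longrightarrow>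
           (\<forall>n w. 2 \<le> n \<and> 1 \<le> w \<and> w \<le> n^2 \<longrightarrow>
              (\<exists>init step out. sw_vc_algorithm n w (4 + \<epsilon>)
                  (K / \<epsilon> * real n * (log 2 (real n))^2) init step out))"
proof (intro exI[of _ 100] conjI allI impI)
  fix \<epsilon> :: real and n w :: nat
  assume "0 < \<epsilon> \<and> \<epsilon> < 1/2" and "2 \<le> n \<and> 1 \<le> w \<and> w \<le> n^2"
  then have \<epsilon>: "0 < \<epsilon>" "\<epsilon> < 1/2" and n: "2 \<le> n" and "1 \<le> w" by auto
  have "0 \<le> \<epsilon> / 2" using \<epsilon> by simp
  have "real n < (1 + \<epsilon> / 2) ^ run_bound \<epsilon> n"
    using n by (intro real_less_power_run_bound \<epsilon>) simp
  from sw_vc_algorithm_exists[OF \<open>0 \<le> \<epsilon> / 2\<close> \<open>1 \<le> w\<close> this run_bound_space_le[OF \<epsilon> n]]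
  show "\<exists>init step out. sw_vc_algorithm n w (4 + \<epsilon>)
          (100 / \<epsilon> * real n * (log 2 (real n))^2) init step out" by simp
qed simp

end
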